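(* Let $u$ be a word of length $n\ge1$ and let $\mathsf{C}[1..n]$ be its cover array. Then $$\mathrm{lseed}(u)=\min\{\mathsf{C}[j] : \mathrm{per}(u)\le j\le n\}.$$
   Context: Positions in $u$ are numbered $1,\dots,n$; $u[i..j]=u_i\cdots u_j$. For a nonempty word $x$, $\mathrm{per}(x)$ is the smallest positive integer $p$ with $x_i=x_{i+p}$ for all $1\le i\le|x|-p$. A word $s$ covers $w$ if every position of $w$ lies in some occurrence of $s$ in $w$. $\mathrm{cover}(x)$ is the length of the shortest word covering $x$, and the cover array is $\mathsf{C}[i]=\mathrm{cover}(u[1..i])$. A seed of $u$ is a factor $s$ of $u$ such that $u$ is a factor of some word covered by $s$; a left seed is a seed that is a prefix of $u$; $\mathrm{lseed}(u)$ is the length of the shortest left seed of $u$. *)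

theory Defs
  imports Main "HOL-Library.Sublist"
begin

(* Words are lists; the paper's position i (1-based) is list index i-1. *)

definition per :: "'a list \<Rightarrow> nat" where
  "per x = (LEAST p. 0 < p \<and> (\<forall>i. i + p < length x \<longrightarrow> x ! i = x ! (i + p)))"

definition occ_at :: "'a list \<Rightarrow> 'a list \<Rightarrow> nat \<Rightarrow> bool" where
  "occ_at s w i \<longleftrightarrow> i + length s \<le> length w \<and> take (length s) (drop i w) = s"

definition covers :: "'a list \<Rightarrow> 'a list \<Rightarrow> bool" where
  "covers s w \<longleftrightarrow> (\<forall>p < length w. \<exists>i. occ_at s w i \<and> i \<le> p \<and> p < i + length s)"

definition cover :: "'a list \<Rightarrow> nat" where
  "cover x = (LEAST m. \<exists>s. length s = m \<and> covers s x)"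

definition cover_array :: "'a list \<Rightarrow> nat \<Rightarrow> nat" where
  "cover_array u i = cover (take i u)"

definition seed :: "'a list \<Rightarrow> 'a list \<Rightarrow> bool" where
  "seed s u \<longleftrightarrow> sublist s u \<and> (\<exists>w. covers s w \<and> sublist u w)"

definition left_seed :: "'a list \<Rightarrow> 'a list \<Rightarrow> bool" where
  "left_seed s u \<longleftrightarrow> seed s u \<and> prefix s u"

definition lseed :: "'a list \<Rightarrow> nat" where
  "lseed u = (LEAST m. \<exists>s. length s = m \<and> left_seed s u)"

end

theory Submission imports Defs begin

text \<open>A left seed of \<open>u\<close> is exactly a word covering some prefix \<open>u[1..j]\<close> with
\<open>per(u) \<le> j\<close>. Such a cover also covers the periodic extensions of \<open>u[1..j]\<close> with
period \<open>per(u)\<close>, since their copies of \<open>u[1..j]\<close> at multiples of the period overlap; a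
long one contains \<open>u\<close>. Conversely, let \<open>u[1..J]\<close> be the longest prefix covered by a left
seed \<open>s\<close>. The occurrence of \<open>s\<close> covering the next position of the word that contains \<open>u\<close>
either ends inside \<open>u\<close>, contradicting maximality, or runs past the end of \<open>u\<close>, which
gives \<open>u\<close> a period at most \<open>J\<close>.\<close>

definition has_period :: "'a list \<Rightarrow> nat \<Rightarrow> bool" where
  "has_period u p \<longleftrightarrow> 0 < p \<and> (\<forall>i. i + p < length u \<longrightarrow> u ! i = u ! (i + p))"

definition periodic_ext :: "'a list \<Rightarrow> nat \<Rightarrow> nat \<Rightarrow> 'a list" where
  "periodic_ext u p L = map (\<lambda>i. u ! (i mod p)) [0..<L]"

lemma per_eq_Least_has_period: "per u = (LEAST p. has_period u p)"
  unfolding per_def has_period_def ..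

lemma has_period_length: "u \<noteq> [] \<Longrightarrow> has_period u (length u)"
  unfolding has_period_def by simp

lemma has_period_per: "u \<noteq> [] \<Longrightarrow> has_period u (per u)"
  unfolding per_eq_Least_has_period by (rule LeastI) (rule has_period_length)

lemma per_le_period: "has_period u p \<Longrightarrow> per u \<le> p"
  unfolding per_eq_Least_has_period by (rule Least_le)

lemma per_le_length: "u \<noteq> [] \<Longrightarrow> per u \<le> length u"
  by (rule per_le_period) (rule has_period_length)

lemma nth_mod_period:
  assumes "has_period u p" "i < length u"
  shows "u ! i = u ! (i mod p)"
  using assms(2)
proof (induction i rule: less_induct)
  case (less i)
  have p: "0 < p" "\<forall>i. i + p < length u \<longrightarrow> u ! i = u ! (i + p)"
    using assms(1) unfolding has_period_def by auto
  show ?case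
  proof (cases "i < p")
    case False
    then have "u ! (i - p) = u ! i" using p(2) less.prems by (metis le_add_diff_inverse2 not_less)
    moreover have "u ! (i - p) = u ! ((i - p) mod p)" using less p(1) False by auto
    ultimately show ?thesis using False by (simp add: le_mod_geq)
  qed simp
qed

lemma occ_at_iff_nth:
  "occ_at s w i \<longleftrightarrow> i + length s \<le> length w \<and> (\<forall>r < length s. w ! (i + r) = s ! r)"
  unfolding occ_at_def by (auto simp: list_eq_iff_nth_eq)

lemma occ_at_append_left: "occ_at s (a @ v) (length a + i) \<longleftrightarrow> occ_at s v i"
  unfolding occ_at_def by simp

lemma occ_at_append_right:
  "i + length s \<le> length u \<Longrightarrow> occ_at s (u @ b) i \<longleftrightarrow> occ_at s u i"
  unfolding occ_at_iff_nth by (auto simp: nth_append)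

lemma occ_at_take: "occ_at s (take j u) i \<longleftrightarrow> occ_at s u i \<and> i + length s \<le> j"
  unfolding occ_at_iff_nth by auto

lemma covers_refl: "covers x x"
  unfolding covers_def by (auto simp: occ_at_def intro!: exI[of _ 0])

lemma covers_imp_prefix:
  assumes "covers s w" "w \<noteq> []"
  shows "prefix s w"
proof -
  obtain i where "occ_at s w i" "i \<le> 0" using assms unfolding covers_def by auto
  then show ?thesis unfolding occ_at_def by (metis le_zero_eq drop0 take_is_prefix)
qed

lemma cover_le: "covers s x \<Longrightarrow> cover x \<le> length s"
  unfolding cover_def by (rule Least_le) blast

lemma cover_witness: "\<exists>s. length s = cover x \<and> covers s x"
  unfolding cover_def by (rule LeastI_ex) (use covers_refl in blast)

lemma left_seed_refl: "left_seed u u"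
  unfolding left_seed_def seed_def using covers_refl by blast

lemma lseed_le: "left_seed s u \<Longrightarrow> lseed u \<le> length s"
  unfolding lseed_def by (rule Least_le) blast

lemma lseed_witness: "\<exists>s. length s = lseed u \<and> left_seed s u"
  unfolding lseed_def by (rule LeastI_ex) (use left_seed_refl in blast)

lemma covers_take_extend:
  assumes "covers s (take J u)" "occ_at s u i" "i \<le> J" "J \<le> i + length s"
  shows "covers s (take (i + length s) u)"
  unfolding covers_def
proof (intro allI impI)
  fix q assume "q < length (take (i + length s) u)"
  then have q: "q < i + length s" by simp
  show "\<exists>i'. occ_at s (take (i + length s) u) i' \<and> i' \<le> q \<and> q < i' + length s"
  proof (cases "q < J")
    case True
    moreover have "i + length s \<le> length u" using assms(2) by (simp add: occ_at_def)
    ultimately have "q < length (take J u)" using q by simp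
    with assms(1) obtain i' where "occ_at s (take J u) i'" "i' \<le> q" "q < i' + length s"
      unfolding covers_def by blast
    then show ?thesis using assms(4) by (auto simp: occ_at_take)
  next
    case False
    then show ?thesis using assms(2,3) q by (auto simp: occ_at_take)
  qed
qed

lemma has_period_of_overhanging_occ:
  assumes occ: "occ_at s (u @ b) i" and "prefix s u" "length u < i + length s" "0 < i"
  shows "has_period u i"
  unfolding has_period_def
proof (intro conjI allI impI)
  fix x assume x: "x + i < length u"
  then have "x < length s" using assms(3) by simp
  then have "(u @ b) ! (i + x) = s ! x" "s ! x = u ! x"
    using occ \<open>prefix s u\<close> by (auto simp: occ_at_iff_nth prefix_def nth_append)
  then show "u ! x = u ! (x + i)" using x by (simp add: nth_append add.commute)
qed (rule assms(4))

lemma prefix_periodic_ext: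
  assumes "has_period u p" "length u \<le> L"
  shows "prefix u (periodic_ext u p L)"
proof -
  have "take (length u) (periodic_ext u p L) = u"
    using assms nth_mod_period[OF assms(1)] by (intro nth_equalityI) (auto simp: periodic_ext_def)
  then show ?thesis by (metis take_is_prefix)
qed

lemma occ_at_periodic_ext:
  assumes "has_period u p" "occ_at s u i" "k * p + i + length s \<le> L"
  shows "occ_at s (periodic_ext u p L) (k * p + i)"
  unfolding occ_at_iff_nth
proof (intro conjI allI impI)
  fix r assume r: "r < length s"
  have "(k * p + i + r) mod p = (i + r) mod p" by (metis add.assoc mod_mult_self3)
  moreover have "u ! ((i + r) mod p) = s ! r"
    using assms(2) r nth_mod_period[OF assms(1), of "i + r"] by (auto simp: occ_at_iff_nth)
  ultimately show "periodic_ext u p L ! (k * p + i + r) = s ! r"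
    using assms(3) r by (simp add: periodic_ext_def add.assoc)
qed (use assms(3) in \<open>simp add: periodic_ext_def\<close>)

lemma covers_periodic_ext:
  assumes per: "has_period u p" and "p \<le> j" "j \<le> length u" and cov: "covers s (take j u)"
  shows "covers s (periodic_ext u p (K * p + j))"
  unfolding covers_def
proof (intro allI impI)
  fix q assume "q < length (periodic_ext u p (K * p + j))"
  then have q: "q < K * p + j" by (simp add: periodic_ext_def)
  define k where "k = min (q div p) K"
  have "0 < p" using per by (simp add: has_period_def)
  then have qp: "q div p * p \<le> q" "q < q div p * p + p"
    using div_mult_mod_eq[of q p] mod_less_divisor[of p q] by linarith+
  have "k * p \<le> q div p * p" by (simp add: k_def)
  with qp have kq: "k * p \<le> q" by linarith
  have "q < k * p + j"
  proof (cases "q div p \<le> K")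
    case True
    then show ?thesis using qp \<open>p \<le> j\<close> by (simp add: k_def)
  qed (use q in \<open>simp add: k_def\<close>)
  with kq \<open>j \<le> length u\<close> have "q - k * p < length (take j u)" by simp
  with cov obtain i where i: "occ_at s (take j u) i" "i \<le> q - k * p" "q - k * p < i + length s"
    unfolding covers_def by blast
  have "k * p \<le> K * p" by (intro mult_le_mono1) (simp add: k_def)
  moreover have "i + length s \<le> j" using i(1) by (simp add: occ_at_take)
  ultimately have "k * p + i + length s \<le> K * p + j" by linarith
  then have "occ_at s (periodic_ext u p (K * p + j)) (k * p + i)"
    using i(1) by (intro occ_at_periodic_ext[OF per]) (simp_all add: occ_at_take)
  then show "\<exists>i. occ_at s (periodic_ext u p (K * p + j)) i \<and> i \<le> q \<and> q < i + length s"
    using i(2,3) kq by (intro exI[of _ "k * p + i"]) auto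
qed

lemma left_seed_of_covers_take:
  assumes per: "has_period u p" and "p \<le> j" "j \<le> length u" and cov: "covers s (take j u)"
  shows "left_seed s u"
proof -
  define w where "w = periodic_ext u p (length u * p + j)"
  have "0 < p" using per by (simp add: has_period_def)
  with assms(2,3) have "take j u \<noteq> []" by auto
  then have "prefix s u"
    using covers_imp_prefix[OF cov] by (metis prefix_order.dual_order.trans take_is_prefix)
  moreover have "covers s w" unfolding w_def using covers_periodic_ext[OF assms] .
  moreover have "length u * 1 \<le> length u * p" using \<open>0 < p\<close> by (intro mult_le_mono2) simp
  then have "sublist u w"
    unfolding w_def by (intro prefix_imp_sublist prefix_periodic_ext[OF per]) linarith
  ultimately show ?thesis unfolding left_seed_def seed_def by (blast intro: prefix_imp_sublist)
qed

text \<open>The occurrence of \<open>s\<close> in \<open>a @ u @ b\<close> covering the position right after \<open>u[1..J]\<close>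
starts strictly inside \<open>u\<close> because \<open>length s \<le> J\<close>; it either ends inside \<open>u\<close> or
overhangs its end.\<close>

lemma covered_prefix_extends:
  assumes cov: "covers s (a @ u @ b)" and "prefix s u"
    and covJ: "covers s (take J u)" and "length s \<le> J" "J < length u"
  shows "(\<exists>i. 0 < i \<and> i \<le> J \<and> has_period u i)
    \<or> (\<exists>J'. J < J' \<and> J' \<le> length u \<and> covers s (take J' u))"
proof -
  have "length a + J < length (a @ u @ b)" using \<open>J < length u\<close> by simp
  with cov obtain i' where i': "occ_at s (a @ u @ b) i'" "i' \<le> length a + J" "length a + J < i' + length s"
    unfolding covers_def by blast
  define i where "i = i' - length a"
  have i: "0 < i" "i \<le> J" "i' = length a + i" using i'(2,3) \<open>length s \<le> J\<close> by (auto simp: i_def)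
  have occ: "occ_at s (u @ b) i" using i'(1) unfolding i(3) occ_at_append_left .
  show ?thesis
  proof (cases "i + length s \<le> length u")
    case True
    then have "occ_at s u i" using occ occ_at_append_right by blast
    then have "covers s (take (i + length s) u)"
      using covJ i(2) i'(3) i(3) by (intro covers_take_extend) auto
    then show ?thesis using True i'(3) i(3) by auto
  next
    case False
    then show ?thesis using has_period_of_overhanging_occ[OF occ \<open>prefix s u\<close>] i by auto
  qed
qed

lemma covers_take_of_left_seed:
  assumes "u \<noteq> []" "left_seed s u"
  shows "\<exists>j. per u \<le> j \<and> j \<le> length u \<and> covers s (take j u)"
proof -
  obtain w where "covers s w" "sublist u w" and pre: "prefix s u"
    using assms(2) unfolding left_seed_def seed_def by blast
  then obtain a b where cov: "covers s (a @ u @ b)" unfolding sublist_def by blast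
  define Js where "Js = {j. j \<le> length u \<and> covers s (take j u)}"
  have "length s \<in> Js"
    using pre covers_refl by (auto simp: Js_def prefix_def prefix_length_le)
  moreover have "finite Js" unfolding Js_def by simp
  ultimately have J: "Max Js \<in> Js" "length s \<le> Max Js" and maxJ: "\<And>j. j \<in> Js \<Longrightarrow> j \<le> Max Js"
    using Max_in Max_ge by blast+
  show ?thesis
  proof (rule ccontr)
    assume "\<not> ?thesis"
    with J(1) have "Max Js < per u" unfolding Js_def by force
    with per_le_length[OF assms(1)] have "Max Js < length u" by simp
    with J(1) consider (periodic) i where "0 < i" "i \<le> Max Js" "has_period u i"
      | (longer) J' where "Max Js < J'" "J' \<le> length u" "covers s (take J' u)"
      using covered_prefix_extends[OF cov pre _ J(2)] unfolding Js_def by blast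
    then show False
    proof cases
      case periodic
      then show False using per_le_period \<open>Max Js < per u\<close> by fastforce
    next
      case longer
      then have "J' \<in> Js" unfolding Js_def by simp
      with maxJ \<open>Max Js < J'\<close> show False by fastforce
    qed
  qed
qed

lemma left_seed_iff_covers_take:
  "u \<noteq> [] \<Longrightarrow> left_seed s u \<longleftrightarrow> (\<exists>j. per u \<le> j \<and> j \<le> length u \<and> covers s (take j u))"
  using left_seed_of_covers_take[OF has_period_per] covers_take_of_left_seed by blast

theorem lemma2:
  fixes u :: "'a list"
  assumes "1 \<le> length u"
  shows "lseed u = Min {cover_array u j | j. per u \<le> j \<and> j \<le> length u}"
proof -
  have u: "u \<noteq> []" using assms by auto
  define S where "S = {cover_array u j | j. per u \<le> j \<and> j \<le> length u}"
  have S: "S = (\<lambda>j. cover (take j u)) ` {per u..length u}"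
    unfolding S_def cover_array_def by auto
  have "finite S" "S \<noteq> {}" using S per_le_length[OF u] by auto
  then have "Min S \<in> S" by (rule Min_in)
  then obtain j where j: "per u \<le> j" "j \<le> length u" "Min S = cover (take j u)"
    unfolding S by auto
  obtain s where "length s = cover (take j u)" "covers s (take j u)" using cover_witness by blast
  then have lseed_le_Min: "lseed u \<le> Min S"
    using j lseed_le left_seed_iff_covers_take[OF u] by metis
  obtain t where t: "length t = lseed u" "left_seed t u" using lseed_witness by blast
  then obtain j' where j': "per u \<le> j'" "j' \<le> length u" "covers t (take j' u)"
    using left_seed_iff_covers_take[OF u] by blast
  have "Min S \<le> cover (take j' u)" using S \<open>finite S\<close> j'(1,2) by simp
  also have "\<dots> \<le> lseed u" using cover_le[OF j'(3)] t(1) by simp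
  finally show ?thesis using lseed_le_Min unfolding S_def by simp
qed

end
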